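(* Let $K$ be a field of characteristic $0$ and $\mathcal{H}$ a finite-dimensional associative $K$-algebra with $1$ which is split semisimple and symmetric with trace form $\tau\colon\mathcal{H}\to K$, and let $\dagger\colon\mathcal{H}\to\mathcal{H}$ be a $K$-linear anti-involution. Assume there exists a $\dagger$-symmetric basis $B_0$ of $\mathcal{H}$. Then $$\mathrm{trace}(\dagger\colon\mathcal{H}\to\mathcal{H})=\sum_{E\in\mathrm{Irr}(\mathcal{H})}\nu_E\dim E.$$ In particular, if $B_0=B_0^\vee$ (as sets), then $|\{b\in B_0\mid b^\vee=b\}|=\sum_{E\in\mathrm{Irr}(\mathcal{H})}\nu_E\dim E$.
   Context: $\mathrm{Irr}(\mathcal{H})$ denotes the set of simple $\mathcal{H}$-modules up to isomorphism; $\chi_E(h)=\mathrm{trace}(h,E)$. The Schur elements $c_E\in K\setminus\{0\}$ are defined by $\tau=\sum_{E\in\mathrm{Irr}(\mathcal{H})}c_E^{-1}\chi_E$. For a basis $B$ of $\mathcal{H}$, the dual basis $B^\vee=\{b^\vee\}$ is defined by $\tau(b'b^\vee)=\delta_{b,b'}$. A basis $B_0$ is $\dagger$-symmetric if $b^\dagger=b^\vee$ for all $b\in B_0$. For $E\in\mathrm{Irr}(\mathcal{H})$, $\nu_E:=\frac{1}{c_E\dim E}\sum_{b\in B_0}\chi_E(b^2)$ (which lies in $\{0,\pm1\}$ and is independent of the choice of $\dagger$-symmetric basis $B_0$). *)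

theory Defs
  imports Main "Jordan_Normal_Form.Matrix"
begin

text \<open>The algebra H is the whole type 'h (a ring with 1), with K-scalar multiplication sc.\<close>

definition is_basis :: "('k::field \<Rightarrow> 'h::ring_1 \<Rightarrow> 'h) \<Rightarrow> 'h set \<Rightarrow> bool" where
  "is_basis sc B \<longleftrightarrow> finite B \<and> \<not> module.dependent sc B \<and> module.span sc B = UNIV"

definition fd_algebra :: "('k::field \<Rightarrow> 'h::ring_1 \<Rightarrow> 'h) \<Rightarrow> bool" where
  "fd_algebra sc \<longleftrightarrow> vector_space sc \<and>
     (\<forall>a x y. sc a (x * y) = sc a x * y \<and> sc a (x * y) = x * sc a y) \<and>
     (\<exists>B. is_basis sc B)"

definition lin_trace :: "('k::field \<Rightarrow> 'h::ring_1 \<Rightarrow> 'h) \<Rightarrow> ('h \<Rightarrow> 'h) \<Rightarrow> 'k" where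
  "lin_trace sc f = (let B = (SOME B. is_basis sc B) in
      (\<Sum>b\<in>B. module.representation sc B (f b) b))"

definition left_ideal :: "('k::field \<Rightarrow> 'h::ring_1 \<Rightarrow> 'h) \<Rightarrow> 'h set \<Rightarrow> bool" where
  "left_ideal sc L \<longleftrightarrow> 0 \<in> L \<and> (\<forall>x\<in>L. \<forall>y\<in>L. x + y \<in> L) \<and>
     (\<forall>a. \<forall>x\<in>L. sc a x \<in> L) \<and> (\<forall>h. \<forall>x\<in>L. h * x \<in> L)"

text \<open>Semisimple: the regular left module is semisimple (every left ideal has a complement).\<close>
definition semisimple_alg :: "('k::field \<Rightarrow> 'h::ring_1 \<Rightarrow> 'h) \<Rightarrow> bool" where
  "semisimple_alg sc \<longleftrightarrow> (\<forall>L. left_ideal sc L \<longrightarrow>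
     (\<exists>L'. left_ideal sc L' \<and> L \<inter> L' = {0} \<and> {x + y |x y. x \<in> L \<and> y \<in> L'} = UNIV))"

text \<open>Finite-dimensional H-modules given as matrix representations of dimension d.\<close>
definition is_rep :: "('k::field \<Rightarrow> 'h::ring_1 \<Rightarrow> 'h) \<Rightarrow> nat \<Rightarrow> ('h \<Rightarrow> 'k mat) \<Rightarrow> bool" where
  "is_rep sc d \<rho> \<longleftrightarrow> (\<forall>x. \<rho> x \<in> carrier_mat d d) \<and> \<rho> 1 = one_mat d \<and>
     (\<forall>x y. \<rho> (x * y) = \<rho> x * \<rho> y) \<and> (\<forall>x y. \<rho> (x + y) = \<rho> x + \<rho> y) \<and>
     (\<forall>a x. \<rho> (sc a x) = smult_mat a (\<rho> x))"

definition rep_dim :: "('h::ring_1 \<Rightarrow> 'k mat) \<Rightarrow> nat" where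
  "rep_dim \<rho> = dim_row (\<rho> 1)"

definition simple_rep :: "('k::field \<Rightarrow> 'h::ring_1 \<Rightarrow> 'h) \<Rightarrow> ('h \<Rightarrow> 'k mat) \<Rightarrow> bool" where
  "simple_rep sc \<rho> \<longleftrightarrow> (let d = rep_dim \<rho> in is_rep sc d \<rho> \<and> d > 0 \<and>
     (\<forall>W. W \<subseteq> carrier_vec d \<and> zero_vec d \<in> W \<and> (\<forall>v\<in>W. \<forall>w\<in>W. v + w \<in> W) \<and>
          (\<forall>a. \<forall>v\<in>W. smult_vec a v \<in> W) \<and> (\<forall>x. \<forall>v\<in>W. mult_mat_vec (\<rho> x) v \<in> W)
        \<longrightarrow> W = {zero_vec d} \<or> W = carrier_vec d))"

definition iso_rep :: "('h::ring_1 \<Rightarrow> 'k::field mat) \<Rightarrow> ('h \<Rightarrow> 'k mat) \<Rightarrow> bool" where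
  "iso_rep \<rho> \<sigma> \<longleftrightarrow> rep_dim \<rho> = rep_dim \<sigma> \<and>
     (\<exists>P. P \<in> carrier_mat (rep_dim \<rho>) (rep_dim \<rho>) \<and> invertible_mat P \<and> (\<forall>x. P * \<rho> x = \<sigma> x * P))"

text \<open>Split: every simple module is absolutely simple (its endomorphisms are scalars).\<close>
definition split_alg :: "('k::field \<Rightarrow> 'h::ring_1 \<Rightarrow> 'h) \<Rightarrow> bool" where
  "split_alg sc \<longleftrightarrow> (\<forall>\<rho>. simple_rep sc \<rho> \<longrightarrow> (\<forall>M \<in> carrier_mat (rep_dim \<rho>) (rep_dim \<rho>).
      (\<forall>x. M * \<rho> x = \<rho> x * M) \<longrightarrow> (\<exists>a. M = smult_mat a (one_mat (rep_dim \<rho>)))))"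

definition irr_reps :: "('k::field \<Rightarrow> 'h::ring_1 \<Rightarrow> 'h) \<Rightarrow> ('h \<Rightarrow> 'k mat) set \<Rightarrow> bool" where
  "irr_reps sc R \<longleftrightarrow> (\<forall>E\<in>R. simple_rep sc E) \<and>
     (\<forall>E\<in>R. \<forall>E'\<in>R. iso_rep E E' \<longrightarrow> E = E') \<and>
     (\<forall>\<rho>. simple_rep sc \<rho> \<longrightarrow> (\<exists>E\<in>R. iso_rep \<rho> E))"

definition mat_trace :: "'k::field mat \<Rightarrow> 'k" where
  "mat_trace A = (\<Sum>i<dim_row A. A $$ (i, i))"

definition character :: "('h::ring_1 \<Rightarrow> 'k::field mat) \<Rightarrow> 'h \<Rightarrow> 'k" where
  "character E h = mat_trace (E h)"

definition symmetric_trace_form :: "('k::field \<Rightarrow> 'h::ring_1 \<Rightarrow> 'h) \<Rightarrow> ('h \<Rightarrow> 'k) \<Rightarrow> bool" where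
  "symmetric_trace_form sc \<tau> \<longleftrightarrow> (\<forall>x y. \<tau> (x + y) = \<tau> x + \<tau> y) \<and> (\<forall>a x. \<tau> (sc a x) = a * \<tau> x) \<and>
     (\<forall>x y. \<tau> (x * y) = \<tau> (y * x)) \<and> (\<forall>x. (\<forall>y. \<tau> (x * y) = 0) \<longrightarrow> x = 0)"

definition anti_involution :: "('k::field \<Rightarrow> 'h::ring_1 \<Rightarrow> 'h) \<Rightarrow> ('h \<Rightarrow> 'h) \<Rightarrow> bool" where
  "anti_involution sc dg \<longleftrightarrow> (\<forall>x y. dg (x + y) = dg x + dg y) \<and> (\<forall>a x. dg (sc a x) = sc a (dg x)) \<and>
     (\<forall>x y. dg (x * y) = dg y * dg x) \<and> (\<forall>x. dg (dg x) = x)"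

definition dual_elem :: "('h::ring_1 \<Rightarrow> 'k::field) \<Rightarrow> 'h set \<Rightarrow> 'h \<Rightarrow> 'h" where
  "dual_elem \<tau> B b = (THE y. \<forall>b'\<in>B. \<tau> (b' * y) = (if b' = b then 1 else 0))"

definition dagger_symmetric_basis ::
  "('k::field \<Rightarrow> 'h::ring_1 \<Rightarrow> 'h) \<Rightarrow> ('h \<Rightarrow> 'k) \<Rightarrow> ('h \<Rightarrow> 'h) \<Rightarrow> 'h set \<Rightarrow> bool" where
  "dagger_symmetric_basis sc \<tau> dg B \<longleftrightarrow> is_basis sc B \<and> (\<forall>b\<in>B. dg b = dual_elem \<tau> B b)"

definition schur_elements ::
  "('h::ring_1 \<Rightarrow> 'k::field) \<Rightarrow> ('h \<Rightarrow> 'k mat) set \<Rightarrow> (('h \<Rightarrow> 'k mat) \<Rightarrow> 'k) \<Rightarrow> bool" where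
  "schur_elements \<tau> R c \<longleftrightarrow> (\<forall>E\<in>R. c E \<noteq> 0) \<and>
     (\<forall>h. \<tau> h = (\<Sum>E\<in>R. inverse (c E) * character E h))"

definition nu :: "(('h::ring_1 \<Rightarrow> 'k::field mat) \<Rightarrow> 'k) \<Rightarrow> 'h set \<Rightarrow> ('h \<Rightarrow> 'k mat) \<Rightarrow> 'k" where
  "nu c B0 E = (1 / (c E * of_nat (rep_dim E))) * (\<Sum>b\<in>B0. character E (b * b))"

end

theory Submission
  imports Defs
begin

text \<open>For a \<open>\<dagger>\<close>-symmetric basis \<open>B\<^sub>0\<close> the dual-basis expansion gives
  \<open>x\<^sup>\<dagger> = \<Sum>\<^sub>a \<tau>(a x) a\<close>, so the trace of \<open>\<dagger>\<close> is \<open>\<Sum>\<^sub>a \<tau>(a\<^sup>2)\<close> in every basis. Expanding \<open>\<tau>\<close> by its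
  Schur elements turns \<open>\<Sum>\<^sub>E \<nu>\<^sub>E dim E\<close> into the same sum (characteristic 0 makes
  \<open>dim E\<close> invertible). If \<open>\<dagger>\<close> permutes \<open>B\<^sub>0\<close>, its trace
  computed in \<open>B\<^sub>0\<close> counts the fixed points. Semisimplicity and splitness enter only through
  the existence of the Schur elements, which is assumed.\<close>

context vector_space
begin

lemma representation_sum_scale_basis:
  assumes "independent B" "span B = UNIV" "finite B" "b \<in> B"
  shows "representation B (\<Sum>a\<in>B. f a *s a) b = f b"
proof -
  have "representation B (\<Sum>a\<in>B. f a *s a) b = (\<Sum>a\<in>B. f a * representation B a b)"
    using representation_sum[OF assms(1), of B "\<lambda>a. f a *s a"] representation_scale[OF assms(1)]
      assms(2) by simp
  also have "\<dots> = f b"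
    using assms(3,4) by (simp add: representation_basis[OF assms(1)] if_distrib cong: if_cong)
  finally show ?thesis .
qed

lemma sum_representation_basis_map_eq_card_fixpoints:
  assumes "independent B" "finite B" "f ` B \<subseteq> B"
  shows "(\<Sum>b\<in>B. representation B (f b) b) = of_nat (card {b\<in>B. f b = b})"
proof -
  have "(\<Sum>b\<in>B. representation B (f b) b) = (\<Sum>b\<in>B. of_bool (f b = b))"
    using assms(3) representation_basis[OF assms(1)] by (intro sum.cong) auto
  also have "\<dots> = of_nat (card {b\<in>B. f b = b})"
    using assms(2) by (simp add: Int_def conj_commute)
  finally show ?thesis .
qed

end

locale symmetric_algebra = vector_space scale
  for scale :: "'k::field \<Rightarrow> 'h::ring_1 \<Rightarrow> 'h" (infixr "*s" 75) +
  fixes tau :: "'h \<Rightarrow> 'k"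
  assumes scale_mult_left: "a *s (x * y) = (a *s x) * y"
    and scale_mult_right: "a *s (x * y) = x * (a *s y)"
    and trace_form: "symmetric_trace_form scale tau"
begin

lemma tau_add: "tau (x + y) = tau x + tau y"
  and tau_scale: "tau (a *s x) = a * tau x"
  and tau_commute: "tau (x * y) = tau (y * x)"
  and tau_nondegenerate: "(\<And>y. tau (x * y) = 0) \<Longrightarrow> x = 0"
  using trace_form by (simp_all add: symmetric_trace_form_def)

lemma tau_zero: "tau 0 = 0"
  using tau_scale[of 0 0] by simp

lemma tau_diff: "tau (x - y) = tau x - tau y"
  using tau_add[of "x - y" y] by simp

lemma tau_sum: "tau (sum f I) = (\<Sum>i\<in>I. tau (f i))"
  by (induction I rule: infinite_finite_induct) (auto simp: tau_add tau_zero)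

lemma tau_mult_sum_scale_right: "tau (x * (\<Sum>i\<in>I. c i *s y i)) = (\<Sum>i\<in>I. c i * tau (x * y i))"
  by (simp add: sum_distrib_left tau_sum tau_scale flip: scale_mult_right)

lemma tau_mult_sum_scale_left: "tau ((\<Sum>i\<in>I. c i *s y i) * x) = (\<Sum>i\<in>I. c i * tau (y i * x))"
  by (simp add: sum_distrib_right tau_sum tau_scale flip: scale_mult_left)

context
  fixes B assumes B: "is_basis scale B"
begin

lemma basis_finite: "finite B" and basis_independent: "independent B"
  and basis_span: "span B = UNIV"
  using B by (simp_all add: is_basis_def)

lemma basis_expansion: "x = (\<Sum>b\<in>B. representation B x b *s b)"
  using sum_representation_eq[OF basis_independent _ basis_finite] basis_span by simp

lemma eq_0_if_tau_basis_mult_eq_0: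
  assumes "\<And>b. b \<in> B \<Longrightarrow> tau (b * y) = 0" shows "y = 0"
proof -
  have "tau (x * y) = 0" for x
  proof -
    have "tau (x * y) = tau ((\<Sum>b\<in>B. representation B x b *s b) * y)"
      by (subst basis_expansion) (rule refl)
    also have "\<dots> = 0" using assms by (simp add: tau_mult_sum_scale_left)
    finally show ?thesis .
  qed
  then show ?thesis using tau_commute tau_nondegenerate by metis
qed

lemma eq_if_tau_basis_mult_eq:
  assumes "\<And>b. b \<in> B \<Longrightarrow> tau (b * y) = tau (b * z)" shows "y = z"
  using eq_0_if_tau_basis_mult_eq_0[of "y - z"] assms by (simp add: right_diff_distrib tau_diff)

text \<open>The map \<open>y \<mapsto> \<Sum>\<^sub>b \<tau>(b y) b\<close> is injective by nondegeneracy, hence surjective;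
  a preimage of \<open>b\<close> is the dual element.\<close>
lemma dual_elem_exists:
  assumes "b \<in> B" shows "\<exists>y. \<forall>b'\<in>B. tau (b' * y) = (if b' = b then 1 else 0)"
proof -
  interpret fd: finite_dimensional_vector_space scale B
    by unfold_locales (simp_all add: basis_finite basis_independent basis_span)
  define f where "f y = (\<Sum>b'\<in>B. tau (b' * y) *s b')" for y
  have rep_f: "representation B (f y) b' = tau (b' * y)" if "b' \<in> B" for y b'
    unfolding f_def
    by (rule representation_sum_scale_basis[OF basis_independent basis_span basis_finite that])
  have "Vector_Spaces.linear scale scale f"
    unfolding Vector_Spaces.linear_iff f_def
  proof (intro conjI allI vector_space_axioms)
    show "(\<Sum>b'\<in>B. tau (b' * (x + y)) *s b')
        = (\<Sum>b'\<in>B. tau (b' * x) *s b') + (\<Sum>b'\<in>B. tau (b' * y) *s b')" for x y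
      by (simp add: distrib_left tau_add scale_left_distrib sum.distrib)
    show "(\<Sum>b'\<in>B. tau (b' * (a *s x)) *s b') = a *s (\<Sum>b'\<in>B. tau (b' * x) *s b')" for a x
      by (simp add: scale_sum_right tau_scale flip: scale_mult_right)
  qed
  moreover have "inj f"
    by (rule injI, rule eq_if_tau_basis_mult_eq) (metis rep_f)
  ultimately obtain y where y: "f y = b"
    using fd.linear_inj_imp_surj by (metis surjD)
  have "tau (b' * y) = (if b' = b then 1 else 0)" if "b' \<in> B" for b'
    using rep_f[OF that, of y] representation_basis[OF basis_independent assms] y by simp
  then show ?thesis by blast
qed

lemma tau_mult_dual_elem:
  assumes "b \<in> B" "b' \<in> B"
  shows "tau (b' * dual_elem tau B b) = (if b' = b then 1 else 0)"
proof -
  obtain y where y: "\<forall>b'\<in>B. tau (b' * y) = (if b' = b then 1 else 0)"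
    using dual_elem_exists[OF assms(1)] by blast
  have "dual_elem tau B b = y"
    unfolding dual_elem_def
  proof (rule the_equality)
    show "\<forall>b'\<in>B. tau (b' * y) = (if b' = b then 1 else 0)" by (rule y)
    show "z = y" if "\<forall>b'\<in>B. tau (b' * z) = (if b' = b then 1 else 0)" for z
      using that y by (intro eq_if_tau_basis_mult_eq) simp
  qed
  then show ?thesis using y assms(2) by simp
qed

lemma dual_basis_expansion: "x = (\<Sum>a\<in>B. tau (a * x) *s dual_elem tau B a)"
proof (rule eq_if_tau_basis_mult_eq)
  fix b assume b: "b \<in> B"
  have "(\<Sum>a\<in>B. tau (a * x) * tau (b * dual_elem tau B a))
      = (\<Sum>a\<in>B. tau (a * x) * (if b = a then 1 else 0))"
    using tau_mult_dual_elem b by (intro sum.cong) auto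
  then show "tau (b * x) = tau (b * (\<Sum>a\<in>B. tau (a * x) *s dual_elem tau B a))"
    using b basis_finite by (simp add: tau_mult_sum_scale_right if_distrib cong: if_cong)
qed

lemma trace_of_sum_tau_scale:
  "(\<Sum>b\<in>B. representation B (\<Sum>a\<in>A. tau (a * b) *s a) b) = (\<Sum>a\<in>A. tau (a * a))"
proof -
  have "representation B (\<Sum>a\<in>A. tau (a * b) *s a) b
      = (\<Sum>a\<in>A. tau (a * b) * representation B a b)" for b
    using representation_sum[OF basis_independent, of A "\<lambda>a. tau (a * b) *s a"]
      representation_scale[OF basis_independent] basis_span by simp
  then have "(\<Sum>b\<in>B. representation B (\<Sum>a\<in>A. tau (a * b) *s a) b)
      = (\<Sum>b\<in>B. \<Sum>a\<in>A. tau (a * b) * representation B a b)"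
    by simp
  also have "\<dots> = (\<Sum>a\<in>A. tau (a * (\<Sum>b\<in>B. representation B a b *s b)))"
    by (subst sum.swap) (simp add: tau_mult_sum_scale_right mult.commute)
  also have "\<dots> = (\<Sum>a\<in>A. tau (a * a))"
    using basis_expansion by simp
  finally show ?thesis .
qed

end

context
  fixes dg B0
  assumes dg: "anti_involution scale dg" and B0: "dagger_symmetric_basis scale tau dg B0"
begin

lemma dagger_eq_sum_tau_scale: "dg x = (\<Sum>a\<in>B0. tau (a * x) *s a)"
proof -
  have basis: "is_basis scale B0" and dual: "\<And>a. a \<in> B0 \<Longrightarrow> dual_elem tau B0 a = dg a"
    using B0 by (auto simp: dagger_symmetric_basis_def)
  have add: "dg (x + y) = dg x + dg y" and scale: "dg (a *s x) = a *s dg x"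
    and invol: "dg (dg x) = x" for x y a
    using dg by (simp_all add: anti_involution_def)
  have sum: "dg (sum f I) = (\<Sum>i\<in>I. dg (f i))" for f and I :: "'h set"
    by (induction I rule: infinite_finite_induct) (auto simp: add add[of 0 0, simplified])
  have "dg x = dg (\<Sum>a\<in>B0. tau (a * x) *s dg a)"
    using dual_basis_expansion[OF basis, of x] dual by (metis (no_types, lifting) sum.cong)
  also have "\<dots> = (\<Sum>a\<in>B0. tau (a * x) *s a)"
    by (simp add: sum scale invol)
  finally show ?thesis .
qed

lemma trace_dagger:
  assumes "is_basis scale B"
  shows "(\<Sum>b\<in>B. representation B (dg b) b) = (\<Sum>a\<in>B0. tau (a * a))"
  using trace_of_sum_tau_scale[OF assms] by (simp add: dagger_eq_sum_tau_scale)

lemma lin_trace_dagger: "lin_trace scale dg = (\<Sum>a\<in>B0. tau (a * a))"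
  using B0 unfolding lin_trace_def Let_def dagger_symmetric_basis_def
  by (metis someI trace_dagger)

end

end

lemma sum_nu_mult_dim_eq_sum_tau_squares:
  fixes c :: "('h::ring_1 \<Rightarrow> 'k::field_char_0 mat) \<Rightarrow> 'k"
  assumes "irr_reps sc R" "schur_elements \<tau> R c"
  shows "(\<Sum>E\<in>R. nu c B0 E * of_nat (rep_dim E)) = (\<Sum>b\<in>B0. \<tau> (b * b))"
proof -
  have "nu c B0 E * of_nat (rep_dim E) = (\<Sum>b\<in>B0. inverse (c E) * character E (b * b))"
    if E: "E \<in> R" for E
  proof -
    have "rep_dim E > 0" using assms(1) E by (auto simp: irr_reps_def simple_rep_def Let_def)
    moreover have "c E \<noteq> 0" using assms(2) E by (simp add: schur_elements_def)
    ultimately have "nu c B0 E * of_nat (rep_dim E) = inverse (c E) * (\<Sum>b\<in>B0. character E (b * b))"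
      by (simp add: nu_def field_simps)
    then show ?thesis by (simp add: sum_distrib_left)
  qed
  then have "(\<Sum>E\<in>R. nu c B0 E * of_nat (rep_dim E))
      = (\<Sum>b\<in>B0. \<Sum>E\<in>R. inverse (c E) * character E (b * b))"
    by (simp add: sum.swap[of _ B0])
  also have "\<dots> = (\<Sum>b\<in>B0. \<tau> (b * b))"
    using assms(2) by (simp add: schur_elements_def)
  finally show ?thesis .
qed

theorem proposition2p6:
  fixes sc :: "'k::field_char_0 \<Rightarrow> 'h::ring_1 \<Rightarrow> 'h"
    and \<tau> :: "'h \<Rightarrow> 'k"
    and dg :: "'h \<Rightarrow> 'h"
    and R :: "('h \<Rightarrow> 'k mat) set"
    and c :: "('h \<Rightarrow> 'k mat) \<Rightarrow> 'k"
    and B0 :: "'h set"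
  assumes "fd_algebra sc"
    and "semisimple_alg sc"
    and "split_alg sc"
    and "symmetric_trace_form sc \<tau>"
    and "anti_involution sc dg"
    and "irr_reps sc R"
    and "schur_elements \<tau> R c"
    and "dagger_symmetric_basis sc \<tau> dg B0"
  shows "lin_trace sc dg = (\<Sum>E\<in>R. nu c B0 E * of_nat (rep_dim E))
    \<and> (dual_elem \<tau> B0 ` B0 = B0 \<longrightarrow>
        of_nat (card {b\<in>B0. dual_elem \<tau> B0 b = b}) = (\<Sum>E\<in>R. nu c B0 E * of_nat (rep_dim E)))"
proof -
  interpret symmetric_algebra sc \<tau>
    using assms(1,4) unfolding symmetric_algebra_def symmetric_algebra_axioms_def fd_algebra_def
    by metis
  have basis: "is_basis sc B0" and dual: "\<And>b. b \<in> B0 \<Longrightarrow> dg b = dual_elem \<tau> B0 b"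
    using assms(8) by (auto simp: dagger_symmetric_basis_def)
  have sum_nu: "(\<Sum>E\<in>R. nu c B0 E * of_nat (rep_dim E)) = (\<Sum>b\<in>B0. \<tau> (b * b))"
    using sum_nu_mult_dim_eq_sum_tau_squares[OF assms(6,7)] .
  have "of_nat (card {b\<in>B0. dual_elem \<tau> B0 b = b}) = (\<Sum>b\<in>B0. \<tau> (b * b))"
    if "dual_elem \<tau> B0 ` B0 = B0"
  proof -
    have "dg ` B0 \<subseteq> B0" and "{b\<in>B0. dual_elem \<tau> B0 b = b} = {b\<in>B0. dg b = b}"
      using that dual by auto
    then show ?thesis
      using sum_representation_basis_map_eq_card_fixpoints[OF basis_independent[OF basis]
          basis_finite[OF basis]] trace_dagger[OF assms(5,8) basis]
      by simp
  qed
  then show ?thesis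
    unfolding sum_nu lin_trace_dagger[OF assms(5,8)] by blast
qed

end
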